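(* Let $m\ge 1$ be an integer, $1<p<\infty$, $q=p/(p-1)$, $K\ge 0$, and $0\le x_1\le x_2\le\cdots\le x_K\le 1$, with $x_0:=0$, $x_{K+1}:=1$. Let $$V^{K,m}_{m,p}[x_1,\dots,x_K]=\{f\in W_{m,p}[0,1] : (-1)^{k-1}f^{(m)}(t)\ge 0 \text{ for a.e. } t\in[x_{k-1},x_k],\ k=1,\dots,K+1\}.$$ Identify the dual space $W_{m,p}^*$ with $W_{m,q}[0,1]$ via the pairing $$\langle\langle g,f\rangle\rangle=\sum_{j=0}^{m-1} g^{(j)}(0)f^{(j)}(0)+\int_0^1 f^{(m)}(t)g^{(m)}(t)\,dt .$$ Then the negative polar of $V^{K,m}_{m,p}[x_1,\dots,x_K]$ is $$V^{K,m}_{m,p}[x_1,\dots,x_K]^-=-V^{K,m}_{m,q}[x_1,\dots,x_K]\cap W^0_{m,q},$$ i.e. the set of $g\in W_{m,q}$ with $g^{(j)}(0)=0$ for $0\le j\le m-1$ and $(-1)^{k-1}g^{(m)}(t)\le 0$ for a.e. $t\in[x_{k-1},x_k]$, $k=1,\dots,K+1$.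
   Context: $W_{m,p}[0,1]$ is the Sobolev space of functions $f$ on $[0,1]$ with $f,f',\dots,f^{(m-1)}$ absolutely continuous and $f^{(m)}\in L_p[0,1]$, normed by $\sum_{j=0}^{m-1}|f^{(j)}(0)|^p+\int_0^1|f^{(m)}|^p$. $W^0_{m,q}$ denotes the subspace of $W_{m,q}$ of functions whose first $m-1$ derivatives (and the function itself) vanish at $t=0$, i.e. $g^{(j)}(0)=0$ for $j=0,\dots,m-1$. For a closed convex cone $C\subset W_{m,p}$, its negative polar is $C^-=\{g\in W_{m,p}^*: \langle\langle g,f\rangle\rangle\le 0 \text{ for all } f\in C\}$. *)

theory Defs
  imports "HOL-Analysis.Analysis"
begin

definition abs_cont_on :: "real set \<Rightarrow> (real \<Rightarrow> real) \<Rightarrow> bool" where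
  "abs_cont_on S f \<longleftrightarrow>
     (\<forall>\<epsilon>>0. \<exists>\<delta>>0. \<forall>(n::nat) (a::nat \<Rightarrow> real) (b::nat \<Rightarrow> real).
        (\<forall>i<n. a i \<le> b i \<and> {a i..b i} \<subseteq> S) \<and>
        (\<forall>i<n. \<forall>j<n. i \<noteq> j \<longrightarrow> b i \<le> a j \<or> b j \<le> a i) \<and>
        (\<Sum>i<n. b i - a i) < \<delta>
        \<longrightarrow> (\<Sum>i<n. \<bar>f (b i) - f (a i)\<bar>) < \<epsilon>)"

text \<open>A function f in W_{m,p}[0,1] is represented together with its derivatives:
  F j is the j-th derivative f^(j) (F 0 = f).\<close>
definition sobolev :: "nat \<Rightarrow> real \<Rightarrow> (nat \<Rightarrow> real \<Rightarrow> real) \<Rightarrow> bool" where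
  "sobolev m p F \<longleftrightarrow>
     (\<forall>j<m. abs_cont_on {0..1} (F j) \<and>
        (AE t in lebesgue_on {0..1}. (F j has_real_derivative F (Suc j) t) (at t within {0..1}))) \<and>
     F m \<in> borel_measurable (lebesgue_on {0..1}) \<and>
     integrable (lebesgue_on {0..1}) (\<lambda>t. \<bar>F m t\<bar> powr p)"

definition sob_pairing :: "nat \<Rightarrow> (nat \<Rightarrow> real \<Rightarrow> real) \<Rightarrow> (nat \<Rightarrow> real \<Rightarrow> real) \<Rightarrow> real" where
  "sob_pairing m G F =
     (\<Sum>j<m. G j 0 * F j 0) + integral\<^sup>L (lebesgue_on {0..1}) (\<lambda>t. F m t * G m t)"

definition V_cone :: "nat \<Rightarrow> real \<Rightarrow> nat \<Rightarrow> (nat \<Rightarrow> real) \<Rightarrow> (nat \<Rightarrow> real \<Rightarrow> real) \<Rightarrow> bool" where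
  "V_cone m p K x F \<longleftrightarrow> sobolev m p F \<and>
     (\<forall>k\<in>{1..K+1}. AE t in lebesgue_on {x (k-1)..x k}. (-1::real)^(k-1) * F m t \<ge> 0)"

end

theory Submission
  imports Defs
begin

text \<open>The inclusion of the right-hand side in the polar is pointwise: on each knot interval
  [x(k-1), x(k)] the top derivatives f^(m) and g^(m) have opposite signs, so the integral in the
  pairing is nonpositive, and the boundary terms vanish. Conversely, testing the polar condition
  against the polynomial f with f^(j)(0) = g^(j)(0) and f^(m) = 0 gives sum_j g^(j)(0)^2 <= 0.
  Testing it against the m-fold primitive of (-1)^(k-1) times the indicator of [c, d], with zero
  initial data and [c, d] inside the open knot interval (x(k-1), x(k)), shows that (-1)^(k-1) g^(m)
  has nonpositive integral over every such [c, d]; Lebesgue's differentiation theorem turns this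
  into the sign condition almost everywhere.\<close>

lemma lipschitz_on_imp_abs_cont_on:
  assumes lip: "L-lipschitz_on S f"
  shows "abs_cont_on S f"
  unfolding abs_cont_on_def
proof (intro allI impI)
  fix \<epsilon> :: real assume e: "\<epsilon> > 0"
  have L: "L \<ge> 0" using lipschitz_on_nonneg[OF lip] .
  show "\<exists>\<delta>>0. \<forall>(n::nat) (a::nat \<Rightarrow> real) (b::nat \<Rightarrow> real).
        (\<forall>i<n. a i \<le> b i \<and> {a i..b i} \<subseteq> S) \<and>
        (\<forall>i<n. \<forall>j<n. i \<noteq> j \<longrightarrow> b i \<le> a j \<or> b j \<le> a i) \<and>
        (\<Sum>i<n. b i - a i) < \<delta>
        \<longrightarrow> (\<Sum>i<n. \<bar>f (b i) - f (a i)\<bar>) < \<epsilon>"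
  proof (intro exI[of _ "\<epsilon> / (L + 1)"] conjI allI impI)
    show "\<epsilon> / (L + 1) > 0" using e L by simp
    fix n and a b :: "nat \<Rightarrow> real"
    assume H: "(\<forall>i<n. a i \<le> b i \<and> {a i..b i} \<subseteq> S) \<and>
        (\<forall>i<n. \<forall>j<n. i \<noteq> j \<longrightarrow> b i \<le> a j \<or> b j \<le> a i) \<and>
        (\<Sum>i<n. b i - a i) < \<epsilon> / (L + 1)"
    have "(\<Sum>i<n. \<bar>f (b i) - f (a i)\<bar>) \<le> (\<Sum>i<n. L * (b i - a i))"
    proof (rule sum_mono)
      fix i assume "i \<in> {..<n}"
      then have "a i \<le> b i" "{a i..b i} \<subseteq> S" using H by auto
      then have "a i \<le> b i" "a i \<in> S" "b i \<in> S" by auto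
      then show "\<bar>f (b i) - f (a i)\<bar> \<le> L * (b i - a i)"
        using lipschitz_onD[OF lip, of "b i" "a i"] by (simp add: dist_real_def)
    qed
    also have "\<dots> = L * (\<Sum>i<n. b i - a i)" by (simp add: sum_distrib_left)
    also have "\<dots> \<le> L * (\<epsilon> / (L + 1))" using H L by (intro mult_left_mono) auto
    also have "\<dots> < (L + 1) * (\<epsilon> / (L + 1))" using e L by (intro mult_strict_right_mono) auto
    also have "\<dots> = \<epsilon>" using L by simp
    finally show "(\<Sum>i<n. \<bar>f (b i) - f (a i)\<bar>) < \<epsilon>" .
  qed
qed

lemma abs_cont_on_uminus: "abs_cont_on S f \<Longrightarrow> abs_cont_on S (\<lambda>t. - f t)"
proof -
  have e: "\<And>a b. \<bar>- f b - - f a\<bar> = \<bar>f b - f a\<bar>" by linarith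
  show "abs_cont_on S f \<Longrightarrow> abs_cont_on S (\<lambda>t. - f t)" unfolding abs_cont_on_def e .
qed

lemma sobolev_uminus: "sobolev m p G \<Longrightarrow> sobolev m p (\<lambda>j t. - G j t)"
  unfolding sobolev_def
proof (elim conjE, intro conjI allI impI)
  fix j assume H: "\<forall>j<m. abs_cont_on {0..1} (G j) \<and>
        (AE t in lebesgue_on {0..1}. (G j has_real_derivative G (Suc j) t) (at t within {0..1}))"
    and j: "j < m"
  show "abs_cont_on {0..1} (\<lambda>t. - G j t)" using H j abs_cont_on_uminus by blast
  have "AE t in lebesgue_on {0..1}. (G j has_real_derivative G (Suc j) t) (at t within {0..1})"
    using H j by blast
  then show "AE t in lebesgue_on {0..1}.
      ((\<lambda>t. - G j t) has_real_derivative - G (Suc j) t) (at t within {0..1})"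
    by (rule AE_mp) (auto intro!: AE_I2 DERIV_minus)
qed auto

lemma integrable_powr_imp_integrable:
  fixes f :: "'a \<Rightarrow> real"
  assumes "finite_measure M" "f \<in> borel_measurable M"
    and "integrable M (\<lambda>t. \<bar>f t\<bar> powr q)" "1 \<le> q"
  shows "integrable M f"
proof (rule Bochner_Integration.integrable_bound[OF Bochner_Integration.integrable_add[OF finite_measure.integrable_const[OF assms(1)] assms(3)] assms(2)])
  have "\<bar>f t\<bar> \<le> 1 + \<bar>f t\<bar> powr q" for t
  proof (cases "\<bar>f t\<bar> \<le> 1")
    case False
    then have "\<bar>f t\<bar> powr 1 \<le> \<bar>f t\<bar> powr q" using assms(4) by (intro powr_mono) auto
    then show ?thesis by simp
  qed (use powr_ge_zero[of "\<bar>f t\<bar>" q] in linarith)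
  then show "AE t in M. norm (f t) \<le> norm (1 + \<bar>f t\<bar> powr q)" by (intro AE_I2) simp
qed

lemma sobolev_integrable_top_derivative:
  assumes "sobolev m q G" "1 \<le> q"
  shows "integrable (lebesgue_on {0..1}) (G m)"
proof (rule integrable_powr_imp_integrable)
  show "finite_measure (lebesgue_on {0..1::real})" by (rule finite_measure_lebesgue_on) simp
qed (use assms in \<open>auto simp: sobolev_def\<close>)

lemma AE_lebesgue_on_negligibleI:
  assumes "negligible N" "S \<in> sets lebesgue" "\<And>t. t \<in> S \<Longrightarrow> t \<notin> N \<Longrightarrow> P t"
  shows "AE t in lebesgue_on S. P t"
proof -
  have "AE t in lebesgue. t \<notin> N"
    using assms(1) by (intro AE_not_in) (simp add: negligible_iff_null_sets)
  then have "AE t in lebesgue. t \<in> S \<longrightarrow> P t" by eventually_elim (use assms(3) in auto)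
  then show ?thesis using assms(2) by (subst AE_restrict_space_iff) auto
qed

lemma lipschitz_on_primitive:
  fixes f :: "real \<Rightarrow> real"
  assumes f: "f integrable_on {a..b}" and B: "B \<ge> 0" "\<And>t. t \<in> {a..b} \<Longrightarrow> \<bar>f t\<bar> \<le> B"
  shows "B-lipschitz_on {a..b} (\<lambda>t. c + integral {a..t} f)"
proof -
  have bound: "\<bar>integral {a..t} f - integral {a..s} f\<bar> \<le> B * (t - s)"
    if st: "s \<le> t" "s \<in> {a..b}" "t \<in> {a..b}" for s t
  proof -
    have "f integrable_on {a..t}" using st by (intro integrable_on_subinterval[OF f]) auto
    then have "integral {a..s} f + integral {s..t} f = integral {a..t} f"
      using st by (intro Henstock_Kurzweil_Integration.integral_combine) auto
    moreover have "norm (integral {s..t} f) \<le> B * Henstock_Kurzweil_Integration.content (cbox s t)"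
    proof (rule has_integral_bound[OF B(1)])
      show "(f has_integral integral {s..t} f) (cbox s t)"
        using st by (simp add: integrable_integral integrable_on_subinterval[OF f])
      show "\<And>u. u \<in> cbox s t \<Longrightarrow> norm (f u) \<le> B" using B(2) st by auto
    qed
    ultimately show ?thesis using st by (simp add: algebra_simps)
  qed
  show ?thesis
  proof (rule lipschitz_onI[OF _ B(1)])
    fix s t assume st: "s \<in> {a..b}" "t \<in> {a..b}"
    have "\<bar>integral {a..s} f - integral {a..t} f\<bar> \<le> B * \<bar>s - t\<bar>"
    proof (cases "s \<le> t")
      case True
      then show ?thesis using bound[OF True st] by (simp add: abs_minus_commute)
    next
      case False
      then show ?thesis using bound[of t s] st by simp
    qed
    then show "dist (c + integral {a..s} f) (c + integral {a..t} f) \<le> B * dist s t"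
      by (simp add: dist_real_def)
  qed
qed

text \<open>The \<open>j\<close>-th derivative of \<open>iter_primitive c m g\<close> is \<open>iter_primitive c (m - j) g\<close>,
  whose value at 0 is \<open>c (m - Suc j)\<close> for \<open>j < m\<close>.\<close>

fun iter_primitive :: "(nat \<Rightarrow> real) \<Rightarrow> nat \<Rightarrow> (real \<Rightarrow> real) \<Rightarrow> real \<Rightarrow> real" where
  "iter_primitive c 0 g = g"
| "iter_primitive c (Suc n) g = (\<lambda>t. c n + integral {0..t} (iter_primitive c n g))"

locale bounded_piecewise_continuous =
  fixes g :: "real \<Rightarrow> real" and S :: "real set"
  assumes measurable: "g \<in> borel_measurable (lebesgue_on {0..1})"
    and integrable: "g integrable_on {0..1}"
    and bounded: "\<exists>B. \<forall>t\<in>{0..1}. \<bar>g t\<bar> \<le> B"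
    and finite_jumps: "finite S"
    and continuous: "\<And>t. t \<in> {0..1} \<Longrightarrow> t \<notin> S \<Longrightarrow> continuous (at t within {0..1}) g"
begin

lemma iter_primitive_integrable_bounded:
  "iter_primitive c n g integrable_on {0..1} \<and> (\<exists>B. \<forall>t\<in>{0..1}. \<bar>iter_primitive c n g t\<bar> \<le> B)"
proof (induction n)
  case 0
  then show ?case using integrable bounded by simp
next
  case (Suc n)
  then obtain B where int: "iter_primitive c n g integrable_on {0..1}"
    and B: "\<forall>t\<in>{0..1}. \<bar>iter_primitive c n g t\<bar> \<le> B" by blast
  have B0: "B \<ge> 0" using B by force
  have lip: "B-lipschitz_on {0..1} (iter_primitive c (Suc n) g)"
    using lipschitz_on_primitive[OF int B0, where c = "c n"] B by simp
  have "\<bar>iter_primitive c (Suc n) g t\<bar> \<le> \<bar>c n\<bar> + B" if t: "t \<in> {0..1}" for t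
  proof -
    have "\<bar>integral {0..t} (iter_primitive c n g)\<bar> \<le> B * t"
      using lipschitz_onD[OF lip t, of 0] t by (simp add: dist_real_def)
    also have "\<dots> \<le> B" using t B0 by (simp add: mult_left_le)
    finally show ?thesis using abs_triangle_ineq[of "c n" "integral {0..t} (iter_primitive c n g)"] by simp
  qed
  moreover have "iter_primitive c (Suc n) g integrable_on {0..1}"
    by (rule integrable_continuous_interval, rule lipschitz_on_continuous_on[OF lip])
  ultimately show ?case by blast
qed

lemma lipschitz_on_iter_primitive: "\<exists>L. L-lipschitz_on {0..1} (iter_primitive c (Suc n) g)"
proof -
  obtain B where int: "iter_primitive c n g integrable_on {0..1}"
    and B: "\<forall>t\<in>{0..1}. \<bar>iter_primitive c n g t\<bar> \<le> B"
    using iter_primitive_integrable_bounded by blast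
  have "B \<ge> 0" using B by force
  then show ?thesis using lipschitz_on_primitive[OF int, of B, where c = "c n"] B by auto
qed

lemma iter_primitive_has_derivative:
  assumes t: "t \<in> {0..1}" and n: "n \<ge> 1 \<or> t \<notin> S"
  shows "(iter_primitive c (Suc n) g has_real_derivative iter_primitive c n g t) (at t within {0..1})"
proof -
  have "((\<lambda>u. integral {0..u} (iter_primitive c n g)) has_real_derivative iter_primitive c n g t)
      (at t within {0..1})"
  proof (cases n)
    case (Suc k)
    obtain L where "L-lipschitz_on {0..1} (iter_primitive c (Suc k) g)"
      using lipschitz_on_iter_primitive by blast
    then show ?thesis
      using integral_has_real_derivative[OF lipschitz_on_continuous_on t] Suc by simp
  next
    case 0
    then have "t \<notin> S" using n by simp
    then have "((\<lambda>u. integral {0..u} g) has_vector_derivative g t) (at t within {0..1} - {})"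
      by (intro integral_has_vector_derivative_continuous_at) (use integrable t continuous in auto)
    then show ?thesis using 0 by (simp add: has_real_derivative_iff_has_vector_derivative)
  qed
  then show ?thesis by (auto intro!: derivative_eq_intros)
qed

lemma sobolev_iter_primitive:
  assumes p: "p \<ge> 0"
  shows "sobolev m p (\<lambda>j. iter_primitive c (m - j) g)"
  unfolding sobolev_def
proof (intro conjI allI impI)
  fix j assume "j < m"
  then have m_j: "m - j = Suc (m - Suc j)" by simp
  obtain L where "L-lipschitz_on {0..1} (iter_primitive c (m - j) g)"
    unfolding m_j using lipschitz_on_iter_primitive by blast
  then show "abs_cont_on {0..1} (iter_primitive c (m - j) g)"
    by (rule lipschitz_on_imp_abs_cont_on)
  show "AE t in lebesgue_on {0..1}.
      (iter_primitive c (m - j) g has_real_derivative iter_primitive c (m - Suc j) g t) (at t within {0..1})"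
  proof (rule AE_lebesgue_on_negligibleI[of S])
    show "negligible S" using finite_jumps by (rule negligible_finite)
    fix t assume "t \<in> {0..1}" "t \<notin> S"
    then show "(iter_primitive c (m - j) g has_real_derivative iter_primitive c (m - Suc j) g t)
        (at t within {0..1})"
      unfolding m_j by (intro iter_primitive_has_derivative) auto
  qed simp
next
  show "iter_primitive c (m - m) g \<in> borel_measurable (lebesgue_on {0..1})"
    using measurable by simp
  obtain B where B: "\<forall>t\<in>{0..1}. \<bar>g t\<bar> \<le> B" using bounded by blast
  show "integrable (lebesgue_on {0..1}) (\<lambda>t. \<bar>iter_primitive c (m - m) g t\<bar> powr p)"
  proof (rule Bochner_Integration.integrable_bound[OF Lebesgue_Measure.integrable_const_ivl[of 0 1 "B powr p"]])
    show "(\<lambda>t. \<bar>iter_primitive c (m - m) g t\<bar> powr p) \<in> borel_measurable (lebesgue_on {0..1})"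
      using measurable by simp measurable
    show "AE t in lebesgue_on {0..1}. norm (\<bar>iter_primitive c (m - m) g t\<bar> powr p) \<le> norm (B powr p)"
      by (rule AE_I2) (use B p in \<open>auto intro!: powr_mono2\<close>)
  qed
qed

end

lemma knots_mono:
  fixes x :: "nat \<Rightarrow> real"
  assumes "\<forall>k\<le>K. x k \<le> x (Suc k)" "i \<le> j" "j \<le> Suc K"
  shows "x i \<le> x j"
proof (rule lift_Suc_mono_le_ivl[where N = "{..K}"])
  show "\<And>n. n \<in> {..K} \<Longrightarrow> x n \<le> x (Suc n)" using assms(1) by simp
qed (use assms in auto)

lemma knots_cover:
  fixes x :: "nat \<Rightarrow> real"
  assumes mono: "\<forall>k\<le>K. x k \<le> x (Suc k)" and "x 0 = 0" "x (Suc K) = 1" "t \<in> {0..1}"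
  shows "\<exists>k\<in>{1..Suc K}. t \<in> {x (k - 1)..x k}"
proof -
  have "t \<le> x n \<longrightarrow> n \<le> Suc K \<longrightarrow> (\<exists>k\<in>{1..Suc K}. t \<in> {x (k - 1)..x k})" for n
  proof (induction n)
    case 0
    have "x 0 \<le> x 1" using knots_mono[OF mono, of 0 1] by simp
    then show ?case using assms(2,4) by (auto intro!: bexI[of _ 1])
  next
    case (Suc n)
    show ?case
    proof (cases "t \<le> x n")
      case True
      then show ?thesis using Suc by auto
    next
      case False
      then show ?thesis by (auto intro!: bexI[of _ "Suc n"])
    qed
  qed
  from this[of "Suc K"] show ?thesis using assms by auto
qed

lemma knot_interval_unique:
  fixes x :: "nat \<Rightarrow> real"
  assumes mono: "\<forall>k\<le>K. x k \<le> x (Suc k)" and k: "k \<in> {1..Suc K}" "k' \<in> {1..Suc K}"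
    and t: "x (k - 1) < t" "t < x k" "t \<in> {x (k' - 1)..x k'}"
  shows "k' = k"
proof (rule ccontr)
  assume "k' \<noteq> k"
  then consider "k' < k" | "k < k'" by linarith
  then show False
  proof cases
    case 1
    then have "x k' \<le> x (k - 1)" using k by (intro knots_mono[OF mono]) auto
    then show False using t by auto
  next
    case 2
    then have "x k \<le> x (k' - 1)" using k by (intro knots_mono[OF mono]) auto
    then show False using t by auto
  qed
qed

lemma sob_pairing_nonpos:
  fixes x :: "nat \<Rightarrow> real"
  assumes knots: "x 0 = 0" "x (Suc K) = 1" "\<forall>k\<le>K. x k \<le> x (Suc k)"
    and F: "V_cone m p K x F" and G: "V_cone m q K x (\<lambda>j t. - G j t)" and G0: "\<forall>j<m. G j 0 = 0"
  shows "sob_pairing m G F \<le> 0"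
proof -
  have "\<forall>k\<in>{1..Suc K}. AE t in lebesgue. t \<in> {x (k - 1)..x k} \<longrightarrow>
      0 \<le> (-1)^(k - 1) * F m t \<and> 0 \<le> (-1)^(k - 1) * - G m t"
  proof
    fix k assume "k \<in> {1..Suc K}"
    then have "AE t in lebesgue. t \<in> {x (k - 1)..x k} \<longrightarrow> 0 \<le> (-1)^(k - 1) * F m t"
      "AE t in lebesgue. t \<in> {x (k - 1)..x k} \<longrightarrow> 0 \<le> (-1)^(k - 1) * - G m t"
      using F G unfolding V_cone_def by (auto simp: AE_restrict_space_iff)
    then show "AE t in lebesgue. t \<in> {x (k - 1)..x k} \<longrightarrow>
        0 \<le> (-1)^(k - 1) * F m t \<and> 0 \<le> (-1)^(k - 1) * - G m t"
      by eventually_elim blast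
  qed
  then have "AE t in lebesgue. \<forall>k\<in>{1..Suc K}. t \<in> {x (k - 1)..x k} \<longrightarrow>
      0 \<le> (-1)^(k - 1) * F m t \<and> 0 \<le> (-1)^(k - 1) * - G m t"
    by (intro eventually_ball_finite) auto
  then have "AE t in lebesgue. t \<in> {0..1} \<longrightarrow> F m t * G m t \<le> 0"
  proof eventually_elim
    case (elim t)
    show ?case
    proof
      assume "t \<in> {0..1}"
      then obtain k where k: "k \<in> {1..Suc K}" "t \<in> {x (k - 1)..x k}"
        using knots_cover[OF knots(3,1,2)] by blast
      define s :: real where "s = (-1)^(k - 1)"
      have "0 \<le> s * F m t" "0 \<le> s * - G m t"
        using elim k unfolding s_def by auto
      then have "0 \<le> (s * F m t) * (s * - G m t)" by (rule mult_nonneg_nonneg)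
      also have "s * s = 1" unfolding s_def by (simp flip: power_mult_distrib)
      then have "(s * F m t) * (s * - G m t) = - (F m t * G m t)" by (simp add: algebra_simps)
      finally show "F m t * G m t \<le> 0" by simp
    qed
  qed
  then have "AE t in lebesgue_on {0..1}. 0 \<le> - (F m t * G m t)"
    by (simp add: AE_restrict_space_iff)
  then have "0 \<le> integral\<^sup>L (lebesgue_on {0..1}) (\<lambda>t. - (F m t * G m t))"
    by (rule integral_nonneg_AE)
  then show ?thesis unfolding sob_pairing_def using G0 by simp
qed

lemma polar_initial_values_vanish:
  assumes p: "0 \<le> p" and polar: "\<forall>F. V_cone m p K x F \<longrightarrow> sob_pairing m G F \<le> 0"
  shows "\<forall>j<m. G j 0 = 0"
proof -
  define F where "F j = iter_primitive (\<lambda>n. G (m - Suc n) 0) (m - j) (\<lambda>_. 0)" for j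
  interpret bounded_piecewise_continuous "\<lambda>_. 0" "{}" by standard auto
  have "V_cone m p K x F"
    unfolding V_cone_def F_def by (auto intro: sobolev_iter_primitive[OF p])
  then have "sob_pairing m G F \<le> 0" using polar by blast
  moreover have "sob_pairing m G F = (\<Sum>j<m. (G j 0)\<^sup>2)"
  proof -
    have "F j 0 = G j 0" if "j < m" for j
      using that by (simp add: F_def Suc_diff_Suc[OF that, symmetric])
    then show ?thesis unfolding sob_pairing_def by (simp add: F_def power2_eq_square)
  qed
  moreover have "0 \<le> (\<Sum>j<m. (G j 0)\<^sup>2)" by (intro sum_nonneg) simp
  ultimately have "(\<Sum>j<m. (G j 0)\<^sup>2) = 0" by linarith
  then show ?thesis by (simp add: sum_nonneg_eq_0_iff)
qed

lemma integral_lebesgue_on_indicator_mult: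
  fixes f :: "real \<Rightarrow> real"
  assumes f: "integrable (lebesgue_on {a..b}) f" and cd: "a \<le> c" "d \<le> b"
  shows "integral\<^sup>L (lebesgue_on {a..b}) (\<lambda>t. indicator {c..d} t * f t) = integral {c..d} f"
proof -
  define I where "I = integral\<^sup>L (lebesgue_on {a..b}) (\<lambda>t. indicator {c..d} t * f t)"
  have "{c..d} \<in> sets (lebesgue_on {a..b})"
    using cd by (auto simp: sets_restrict_space_iff)
  then have "integrable (lebesgue_on {a..b}) (\<lambda>t. indicator {c..d} t * f t)"
    using integrable_real_mult_indicator[OF _ f] by (simp add: mult.commute)
  then have "((\<lambda>t. indicator {c..d} t * f t) has_integral I) {a..b}"
    unfolding I_def by (rule has_integral_integral_lebesgue_on) simp
  moreover have "(\<lambda>t. indicator {c..d} t * f t) = (\<lambda>t. if t \<in> {c..d} then f t else 0)"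
    by (auto simp: indicator_def)
  ultimately have "(f has_integral I) ({c..d} \<inter> {a..b})"
    by (simp only: has_integral_restrict_Int)
  moreover have "{c..d} \<inter> {a..b} = {c..d}" using cd by auto
  ultimately have "(f has_integral I) {c..d}" by metis
  then show ?thesis unfolding I_def by (rule integral_unique[symmetric])
qed

lemma V_cone_iter_primitive_indicator:
  fixes x :: "nat \<Rightarrow> real"
  assumes p: "0 \<le> p" and mono: "\<forall>k\<le>K. x k \<le> x (Suc k)"
    and k: "k \<in> {1..Suc K}" and cd: "x (k - 1) < c" "c < d" "d < x k"
  shows "V_cone m p K x
    (\<lambda>j. iter_primitive (\<lambda>_. 0) (m - j) (\<lambda>t. (-1)^(k - 1) * indicator {c..d} t))"
    (is "V_cone m p K x (\<lambda>j. iter_primitive _ (m - j) ?g)")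
proof -
  interpret bounded_piecewise_continuous ?g "{c, d}"
  proof
    show "?g \<in> borel_measurable (lebesgue_on {0..1})"
      by (intro measurable_restrict_space1 measurable_completion) simp
    have "?g = (\<lambda>t. if t \<in> {c..d} then (-1)^(k - 1) else 0)"
      by (auto simp: indicator_def)
    then show "?g integrable_on {0..1}"
      by (simp only: integrable_restrict_Int) (rule integrable_on_const, auto)
    show "\<exists>B. \<forall>t\<in>{0..1}. \<bar>?g t\<bar> \<le> B"
      by (auto simp: indicator_def power_abs)
    fix t :: real assume "t \<in> {0..1}" "t \<notin> {c, d}"
    moreover have "frontier {c..d} = {c, d}"
      using frontier_cbox[of c d] cd by (auto simp: cbox_interval box_real)
    ultimately have "t \<notin> frontier {c..d}" by simp
    then have "isCont ?g t" by (simp add: isCont_indicator)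
    then show "continuous (at t within {0..1}) ?g" by (rule continuous_at_imp_continuous_within)
  qed simp
  show ?thesis
    unfolding V_cone_def
  proof (intro conjI ballI sobolev_iter_primitive[OF p] AE_I2)
    fix k' t assume k': "k' \<in> {1..K + 1}" and t: "t \<in> space (lebesgue_on {x (k' - 1)..x k'})"
    show "0 \<le> (-1)^(k' - 1) * iter_primitive (\<lambda>_. 0) (m - m) ?g t"
    proof (cases "t \<in> {c..d}")
      case True
      then have "k' = k" using k k' t cd by (intro knot_interval_unique[OF mono]) auto
      then show ?thesis using True by (simp flip: power_mult_distrib)
    qed simp
  qed
qed

lemma polar_interval_integral_nonpos:
  fixes x :: "nat \<Rightarrow> real"
  assumes G: "sobolev m q G" "1 \<le> q" and p: "0 \<le> p"
    and polar: "\<forall>F. V_cone m p K x F \<longrightarrow> sob_pairing m G F \<le> 0"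
    and knots: "x 0 = 0" "x (Suc K) = 1" "\<forall>k\<le>K. x k \<le> x (Suc k)"
    and k: "k \<in> {1..Suc K}" and cd: "x (k - 1) < c" "c < d" "d < x k"
  shows "integral {c..d} (\<lambda>t. (-1)^(k - 1) * G m t) \<le> 0"
proof -
  define s :: real where "s = (-1)^(k - 1)"
  define F where "F j = iter_primitive (\<lambda>_. 0) (m - j) (\<lambda>t. s * indicator {c..d} t)" for j
  have "x 0 \<le> x (k - 1)" "x k \<le> x (Suc K)" using k by (intro knots_mono[OF knots(3)]; auto)+
  then have cd01: "0 \<le> c" "d \<le> 1" using knots(1,2) cd by auto
  have "integral {c..d} (\<lambda>t. s * G m t) =
      integral\<^sup>L (lebesgue_on {0..1}) (\<lambda>t. indicator {c..d} t * (s * G m t))"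
    using sobolev_integrable_top_derivative[OF G] cd01
    by (intro integral_lebesgue_on_indicator_mult[symmetric]) auto
  also have "\<dots> = sob_pairing m G F"
  proof -
    have "F j 0 = 0" if "j < m" for j
      using that by (simp add: F_def Suc_diff_Suc[OF that, symmetric])
    then show ?thesis unfolding sob_pairing_def by (simp add: F_def algebra_simps)
  qed
  also have "\<dots> \<le> 0"
  proof -
    have "V_cone m p K x F"
      unfolding F_def s_def by (rule V_cone_iter_primitive_indicator[OF p knots(3) k cd])
    then show ?thesis using polar by blast
  qed
  finally show ?thesis unfolding s_def .
qed

lemma AE_nonpos_if_interval_integrals_nonpos:
  fixes f :: "real \<Rightarrow> real"
  assumes f: "f integrable_on {a..b}"
    and I: "\<And>c d. a < c \<Longrightarrow> c < d \<Longrightarrow> d < b \<Longrightarrow> integral {c..d} f \<le> 0"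
  shows "AE t in lebesgue_on {a..b}. f t \<le> 0"
proof -
  txt \<open>If \<open>f t > 0\<close> at a Lebesgue point \<open>t\<close>, the averages of \<open>f\<close> over short intervals
    \<open>[t, t + r]\<close> would be positive.\<close>
  define h where "h t = (if t \<in> {a..b} then f t else 0)" for t
  have "h integrable_on cbox u v" for u v :: real
    unfolding h_def cbox_interval integrable_restrict_Int Int_atLeastAtMost
    by (rule integrable_on_subinterval[OF f]) auto
  then obtain N where N: "negligible N"
    "\<And>t e. \<lbrakk>t \<notin> N; 0 < e\<rbrakk> \<Longrightarrow> \<exists>d>0. \<forall>r. 0 < r \<and> r < d \<longrightarrow>
        norm (integral (cbox t (t + r *\<^sub>R One)) h /\<^sub>R r ^ DIM(real) - h t) < e"
    using integrable_ccontinuous_explicit[of h] by blast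
  show ?thesis
  proof (rule AE_lebesgue_on_negligibleI[of "N \<union> {a, b}"])
    show "negligible (N \<union> {a, b})" using N(1) by (simp add: negligible_insert)
    fix t assume t: "t \<in> {a..b}" "t \<notin> N \<union> {a, b}"
    show "f t \<le> 0"
    proof (rule ccontr)
      assume "\<not> f t \<le> 0"
      then have pos: "h t > 0" using t by (simp add: h_def)
      obtain \<delta> where \<delta>: "\<delta> > 0" "\<forall>r. 0 < r \<and> r < \<delta> \<longrightarrow>
          norm (integral (cbox t (t + r *\<^sub>R One)) h /\<^sub>R r ^ DIM(real) - h t) < h t"
        using N(2)[OF _ pos] t by blast
      define r where "r = min (\<delta> / 2) ((b - t) / 2)"
      have "r \<le> \<delta> / 2" "r \<le> (b - t) / 2" unfolding r_def by (rule min.cobounded1, rule min.cobounded2)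
      then have r: "0 < r" "r < \<delta>" "t + r < b" using \<delta> t by (auto simp: r_def)
      have "\<bar>integral {t..t + r} h / r - h t\<bar> < h t"
        using \<delta>(2)[rule_format, of r] r by (simp add: cbox_interval divide_inverse mult.commute)
      moreover have "integral {t..t + r} h = integral {t..t + r} f"
        using t r by (intro integral_cong) (auto simp: h_def)
      moreover have "integral {t..t + r} f \<le> 0" using t r by (intro I) auto
      then have "integral {t..t + r} f / r \<le> 0" using r by (simp add: divide_nonpos_pos)
      ultimately show False using pos by (simp add: abs_less_iff)
    qed
  qed simp
qed

lemma polar_imp_V_cone_uminus:
  fixes x :: "nat \<Rightarrow> real"
  assumes G: "sobolev m q G" "1 \<le> q" and p: "0 \<le> p"
    and polar: "\<forall>F. V_cone m p K x F \<longrightarrow> sob_pairing m G F \<le> 0"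
    and knots: "x 0 = 0" "x (Suc K) = 1" "\<forall>k\<le>K. x k \<le> x (Suc k)"
  shows "V_cone m q K x (\<lambda>j t. - G j t)"
  unfolding V_cone_def
proof (intro conjI ballI sobolev_uminus[OF G(1)])
  fix k assume k: "k \<in> {1..K + 1}"
  have "x 0 \<le> x (k - 1)" "x (k - 1) \<le> x k" "x k \<le> x (Suc K)"
    using k by (intro knots_mono[OF knots(3)]; auto)+
  then have "{x (k - 1)..x k} \<subseteq> {0..1}" using knots(1,2) by auto
  then have "(\<lambda>t. (-1)^(k - 1) * G m t) integrable_on {x (k - 1)..x k}"
    using sobolev_integrable_top_derivative[OF G]
    by (intro integrable_on_mult_right integrable_on_subinterval[OF integrable_on_lebesgue_on]) auto
  then have "AE t in lebesgue_on {x (k - 1)..x k}. (-1)^(k - 1) * G m t \<le> 0"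
    using k by (intro AE_nonpos_if_interval_integrals_nonpos polar_interval_integral_nonpos[OF G p polar knots])
      auto
  then show "AE t in lebesgue_on {x (k - 1)..x k}. 0 \<le> (-1)^(k - 1) * - G m t"
    by eventually_elim simp
qed

theorem corollary1:
  fixes m K :: nat and p q :: real and x :: "nat \<Rightarrow> real"
    and G :: "nat \<Rightarrow> real \<Rightarrow> real"
  assumes "m \<ge> 1" and "1 < p" and "q = p / (p - 1)"
    and "x 0 = 0" and "x (Suc K) = 1" and "\<forall>k\<le>K. x k \<le> x (Suc k)"
    and "sobolev m q G"
  shows "(\<forall>F. V_cone m p K x F \<longrightarrow> sob_pairing m G F \<le> 0) \<longleftrightarrow>
         ((\<forall>j<m. G j 0 = 0) \<and> V_cone m q K x (\<lambda>j t. - G j t))"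
proof -
  have p: "0 \<le> p" using assms(2) by simp
  have q: "1 \<le> q" using assms(2) unfolding assms(3) by (simp add: le_divide_eq)
  show ?thesis
    using polar_initial_values_vanish[OF p] polar_imp_V_cone_uminus[OF assms(7) q p _ assms(4-6)]
      sob_pairing_nonpos[OF assms(4-6)]
    by blast
qed

end
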